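(* Let $a$ be a positive integer with $\sigma(a)\neq 2a$, and let $b,c$ be coprime integers with $c>0$ and $\dfrac{b}{c}=\dfrac{a}{2a-\sigma(a)}$. Let $\alpha,\beta,x,y$ be positive integers and put $$p=\alpha x-1,\quad q=\beta y-1,\quad r=\beta x-1,\quad s=\alpha y-1.$$ Suppose $p,q,r,s$ are primes with $p\neq q$, $r\neq s$, none of which divides $a$. If $$\bigl(c\alpha\beta x-b(\alpha+\beta)\bigr)\bigl(c\alpha\beta y-b(\alpha+\beta)\bigr)=b^2(\alpha+\beta)^2-2bc\alpha\beta,$$ then $apq$ and $ars$ are amicable numbers.
   Context: For a positive integer $N$, $\sigma(N)$ denotes the sum of all positive divisors of $N$. Positive integers $M,N$ are amicable if $\sigma(M)-M=N$ and $\sigma(N)-N=M$. *)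

theory Defs
  imports Complex_Main "HOL-Computational_Algebra.Primes"
begin

definition sigma :: "nat \<Rightarrow> nat" where
  "sigma N = (\<Sum>d\<in>{d. d dvd N}. d)"

definition amicable :: "nat \<Rightarrow> nat \<Rightarrow> bool" where
  "amicable M N \<longleftrightarrow> M > 0 \<and> N > 0 \<and> int (sigma M) - int M = int N \<and> int (sigma N) - int N = int M"

end

theory Submission
  imports Defs
begin

text \<open>With \<open>p + 1 = \<alpha>x\<close>, \<open>q + 1 = \<beta>y\<close>, \<open>r + 1 = \<beta>x\<close>, \<open>s + 1 = \<alpha>y\<close>, multiplicativity of \<open>\<sigma>\<close>
  gives \<open>\<sigma>(apq) = \<sigma>(ars) = \<sigma>(a)\<alpha>\<beta>xy\<close>, so both numbers are amicable iff
  \<open>\<sigma>(a)\<alpha>\<beta>xy = a(pq + rs)\<close>, i.e. \<open>(2a - \<sigma>(a))\<alpha>\<beta>xy = a((\<alpha> + \<beta>)(x + y) - 2)\<close>.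
  Replacing \<open>a/(2a - \<sigma>(a))\<close> by \<open>b/c\<close> turns this into \<open>c\<alpha>\<beta>xy = b((\<alpha> + \<beta>)(x + y) - 2)\<close>,
  which is the hypothesis divided by \<open>c\<alpha>\<beta>\<close>.\<close>

lemma amicable_iff_sigma_eq_sum:
  "amicable M N \<longleftrightarrow> M > 0 \<and> N > 0 \<and> sigma M = M + N \<and> sigma N = M + N"
  unfolding amicable_def by linarith

lemma sigma_mult_prime:
  fixes m p :: nat
  assumes "m > 0" "prime p" "\<not> p dvd m"
  shows "sigma (m * p) = sigma m * (p + 1)"
proof -
  let ?D = "{d. d dvd m}"
  have "p > 0" using assms(2) prime_gt_0_nat by blast
  have divisors: "{d. d dvd m * p} = ?D \<union> (*) p ` ?D"
  proof (intro equalityI subsetI)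
    fix d assume "d \<in> {d. d dvd m * p}"
    then have d: "d dvd m * p" by simp
    show "d \<in> ?D \<union> (*) p ` ?D"
    proof (cases "p dvd d")
      case True
      then obtain e where "d = p * e" by blast
      with d \<open>p > 0\<close> have "e dvd m" by (simp add: mult.commute)
      then show ?thesis using \<open>d = p * e\<close> by blast
    next
      case False
      then have "coprime d p"
        using assms(2) by (metis coprime_commute prime_imp_coprime)
      then show ?thesis using d coprime_dvd_mult_left_iff by blast
    qed
  qed (auto simp: mult.commute)
  have "?D \<inter> (*) p ` ?D = {}"
    using assms(3) dvd_mult_left by blast
  moreover have "inj_on ((*) p) ?D" using \<open>p > 0\<close> by (auto simp: inj_on_def)
  moreover have "finite ?D" using assms(1) by simp
  ultimately have "sigma (m * p) = sigma m + (\<Sum>d\<in>?D. p * d)"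
    unfolding sigma_def divisors by (simp add: sum.union_disjoint sum.reindex)
  also have "\<dots> = sigma m + p * sigma m"
    by (simp add: sigma_def sum_distrib_left)
  also have "\<dots> = sigma m * (p + 1)"
    by simp
  finally show ?thesis .
qed

lemma sigma_mult_two_primes:
  fixes m p q :: nat
  assumes "m > 0" "prime p" "prime q" "p \<noteq> q" "\<not> p dvd m" "\<not> q dvd m"
  shows "sigma (m * p * q) = sigma m * (p + 1) * (q + 1)"
proof -
  have "\<not> q dvd m * p"
    using assms by (metis prime_dvd_mult_iff primes_dvd_imp_eq)
  moreover have "m * p > 0" using assms prime_gt_0_nat by simp
  ultimately show ?thesis using sigma_mult_prime assms by simp
qed

lemma sigma_mult_two_primes_pred:
  fixes m u v :: nat
  assumes "m > 0" "prime (u - 1)" "prime (v - 1)" "u - 1 \<noteq> v - 1"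
    and "\<not> (u - 1) dvd m" "\<not> (v - 1) dvd m"
  shows "sigma (m * (u - 1) * (v - 1)) = sigma m * u * v"
proof -
  have "0 < u - 1" "0 < v - 1"
    using assms(2,3) prime_gt_0_nat by blast+
  then have "u - 1 + 1 = u" "v - 1 + 1 = v"
    by simp_all
  then show ?thesis
    using sigma_mult_two_primes[OF assms] by (simp only:)
qed

lemma ratio_cross_multiply:
  fixes a S :: nat and b c :: int
  assumes "S \<noteq> 2 * a" "c \<noteq> 0"
    and "(of_int b / of_int c :: rat) = of_nat a / (2 * of_nat a - of_nat S)"
  shows "b * (2 * int a - int S) = c * int a"
proof -
  have "(of_int (2 * int a - int S) :: rat) \<noteq> 0" using assms(1) by simp
  then have "(of_int b :: rat) * of_int (2 * int a - int S) = of_int c * of_nat a"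
    using assms(2,3) by (simp add: field_simps)
  then have "(of_int (b * (2 * int a - int S)) :: rat) = of_int (c * int a)"
    by simp
  then show ?thesis by (simp only: of_int_eq_iff)
qed

lemma quadratic_condition_cancel:
  fixes b c A B x y :: int
  assumes "c * A * B \<noteq> 0"
    and "(c * A * B * x - b * (A + B)) * (c * A * B * y - b * (A + B))
         = b^2 * (A + B)^2 - 2 * b * c * A * B"
  shows "c * A * B * x * y = b * ((A + B) * (x + y) - 2)"
proof -
  have "c * A * B * (c * A * B * x * y - b * ((A + B) * (x + y) - 2)) = 0"
    using assms(2) by (simp add: algebra_simps power2_eq_square)
  with assms(1) show ?thesis by simp
qed

lemma sigma_relation_from_ratio:
  fixes a S b c A B x y :: int
  assumes "b * (2 * a - S) = c * a" "c \<noteq> 0"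
    and "c * A * B * x * y = b * ((A + B) * (x + y) - 2)"
  shows "S * (A * x) * (B * y) = a * ((A * x - 1) * (B * y - 1) + (B * x - 1) * (A * y - 1))"
proof -
  have "c * ((2 * a - S) * A * B * x * y) = (2 * a - S) * (c * A * B * x * y)"
    by (simp add: algebra_simps)
  also have "\<dots> = (2 * a - S) * (b * ((A + B) * (x + y) - 2))"
    by (simp only: assms(3))
  also have "\<dots> = b * (2 * a - S) * ((A + B) * (x + y) - 2)"
    by (simp only: mult_ac)
  also have "\<dots> = c * (a * ((A + B) * (x + y) - 2))"
    by (simp only: assms(1) mult.assoc)
  finally have "(2 * a - S) * A * B * x * y = a * ((A + B) * (x + y) - 2)"
    using assms(2) by simp
  then show ?thesis by (simp add: algebra_simps)
qed

lemma amicable_mult_pred_primes: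
  fixes a u v w z :: nat
  assumes "a > 0"
    and "prime (u - 1)" "prime (v - 1)" "prime (w - 1)" "prime (z - 1)"
    and "u - 1 \<noteq> v - 1" "w - 1 \<noteq> z - 1"
    and "\<not> (u - 1) dvd a" "\<not> (v - 1) dvd a" "\<not> (w - 1) dvd a" "\<not> (z - 1) dvd a"
    and "u * v = w * z"
    and "int (sigma a) * int u * int v
         = int a * ((int u - 1) * (int v - 1) + (int w - 1) * (int z - 1))"
  shows "amicable (a * (u - 1) * (v - 1)) (a * (w - 1) * (z - 1))"
proof -
  have sigma_M: "sigma (a * (u - 1) * (v - 1)) = sigma a * u * v"
    using sigma_mult_two_primes_pred[OF assms(1,2,3,6,8,9)] .
  have sigma_N: "sigma (a * (w - 1) * (z - 1)) = sigma a * u * v"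
    using sigma_mult_two_primes_pred[OF assms(1,4,5,7,10,11)] assms(12)
    by (simp only: mult.assoc)
  have "0 < u - 1" "0 < v - 1" "0 < w - 1" "0 < z - 1"
    using assms(2-5) prime_gt_0_nat by blast+
  then have "int (a * (u - 1) * (v - 1)) = int a * (int u - 1) * (int v - 1)"
    and "int (a * (w - 1) * (z - 1)) = int a * (int w - 1) * (int z - 1)"
    and positive: "a * (u - 1) * (v - 1) > 0" "a * (w - 1) * (z - 1) > 0"
    using assms(1) by (simp_all add: of_nat_diff)
  then have "int (sigma a * u * v) = int (a * (u - 1) * (v - 1)) + int (a * (w - 1) * (z - 1))"
    using assms(13) by (simp only: of_nat_mult distrib_left mult.assoc)
  then have "sigma a * u * v = a * (u - 1) * (v - 1) + a * (w - 1) * (z - 1)"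
    by (simp only: of_nat_add [symmetric] of_nat_eq_iff)
  with positive show ?thesis
    unfolding amicable_iff_sigma_eq_sum sigma_M sigma_N by blast
qed

theorem mainTheorem8:
  fixes a \<alpha> \<beta> x y :: nat and b c :: int
  assumes "a > 0" and "sigma a \<noteq> 2 * a"
    and "coprime b c" and "c > 0"
    and "(of_int b / of_int c :: rat) = of_nat a / (2 * of_nat a - of_nat (sigma a))"
    and "\<alpha> > 0" "\<beta> > 0" "x > 0" "y > 0"
    and "prime (\<alpha> * x - 1)" "prime (\<beta> * y - 1)" "prime (\<beta> * x - 1)" "prime (\<alpha> * y - 1)"
    and "\<alpha> * x - 1 \<noteq> \<beta> * y - 1" "\<beta> * x - 1 \<noteq> \<alpha> * y - 1"
    and "\<not> (\<alpha> * x - 1) dvd a" "\<not> (\<beta> * y - 1) dvd a"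
    and "\<not> (\<beta> * x - 1) dvd a" "\<not> (\<alpha> * y - 1) dvd a"
    and "(c * \<alpha> * \<beta> * x - b * (\<alpha> + \<beta>)) * (c * \<alpha> * \<beta> * y - b * (\<alpha> + \<beta>))
         = b^2 * (\<alpha> + \<beta>)^2 - 2 * b * c * \<alpha> * \<beta>"
  shows "amicable (a * (\<alpha> * x - 1) * (\<beta> * y - 1)) (a * (\<beta> * x - 1) * (\<alpha> * y - 1))"
proof -
  have ratio: "b * (2 * int a - int (sigma a)) = c * int a"
    by (rule ratio_cross_multiply[OF _ _ assms(5)]) (use assms(2,4) in auto)
  have cancel: "c * int \<alpha> * int \<beta> * int x * int y
      = b * ((int \<alpha> + int \<beta>) * (int x + int y) - 2)"
    by (rule quadratic_condition_cancel) (use assms(4,6,7,20) in simp_all)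
  have "int (sigma a) * (int \<alpha> * int x) * (int \<beta> * int y)
      = int a * ((int \<alpha> * int x - 1) * (int \<beta> * int y - 1)
                 + (int \<beta> * int x - 1) * (int \<alpha> * int y - 1))"
    by (rule sigma_relation_from_ratio[OF ratio _ cancel]) (use assms(4) in simp)
  then show ?thesis
    by (intro amicable_mult_pred_primes assms(1,10-19)) (simp_all only: of_nat_mult mult_ac)
qed

end
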